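(* Let $G$ be an oriented graph derived from a Burling tree $T$ and let $uv$ be a top arc of $G$ with respect to $T$ such that $u$ is a source of $G$. Let $G'$ be obtained from $G$ by top-subdividing $uv$ (removing the arc $uv$ and adding a new vertex $w$ with arcs $wv$ and $wu$). Then $G'$ can be derived from a Burling tree $T'$ in such a way that, with respect to $T'$: $wv$ is a top arc of $G'$; $wu$ is a bottom arc of $G'$; every top arc of $G$ with respect to $T$ other than $uv$ is a top arc of $G'$; and every bottom arc of $G$ with respect to $T$ other than $uv$ is a bottom arc of $G'$.
   Context: Oriented graphs are finite, without loops, multiple arcs or pairs of opposite arcs. In a rooted tree $T$ with root $r$, each non-root vertex $v$ has a parent $p(v)$; children, leaves, ancestors and descendants are as usual. A branch is a sequence $v_1\dots v_k$ ($k\ge0$) with $v_i$ the parent of $v_{i+1}$; it starts at $v_1$. A Burling tree is a 4-tuple $(T,r,\ell,c)$: $T$ a rooted tree with root $r$; $\ell$ assigns to each non-leaf vertex $v$ one of its children $\ell(v)$ (the last-born of $v$); $c$ assigns to every vertex $v$ that is neither the root nor a last-born the vertex-set of a (possibly empty) branch starting at $\ell(p(v))$, and $c(v)=\emptyset$ if $v$ is the root or a last-born. The oriented graph fully derived from it has vertex-set $V(T)$ and an arc $uv$ iff $v\in c(u)$; an oriented graph is derived from the Burling tree if it is an induced subgraph of the fully derived one. If $G$ is derived from $T$ and $uv$ is an arc of $G$, then all out-neighbors of $u$ lie on one branch of $T$; $uv$ is a top arc with respect to $T$ if $v$ is the out-neighbor of $u$ closest in $T$ to the root, and a bottom arc with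 respect to $T$ if $v$ is the out-neighbor of $u$ furthest in $T$ from the root. *)

theory Defs
  imports Main
begin

definition oriented_graph :: "'a set \<Rightarrow> ('a \<times> 'a) set \<Rightarrow> bool" where
  "oriented_graph V A \<longleftrightarrow> finite V \<and> A \<subseteq> V \<times> V \<and>
     (\<forall>x. (x, x) \<notin> A) \<and> (\<forall>x y. (x, y) \<in> A \<longrightarrow> (y, x) \<notin> A)"

definition is_source :: "('a \<times> 'a) set \<Rightarrow> 'a \<Rightarrow> bool" where
  "is_source A u \<longleftrightarrow> (\<forall>x. (x, u) \<notin> A)"

definition top_subdiv_vertices :: "'a set \<Rightarrow> 'a \<Rightarrow> 'a set" where
  "top_subdiv_vertices V w = insert w V"

definition top_subdiv_arcs :: "('a \<times> 'a) set \<Rightarrow> 'a \<Rightarrow> 'a \<Rightarrow> 'a \<Rightarrow> ('a \<times> 'a) set" where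
  "top_subdiv_arcs A u v w = (A - {(u, v)}) \<union> {(w, v), (w, u)}"

text \<open>A rooted tree is given by its vertex set, its root and a parent function
  (the value of the parent function at the root is irrelevant).
  lb is the last-born function and cf the function c.\<close>

record 'a btree =
  tverts :: "'a set"
  troot :: 'a
  tpar :: "'a \<Rightarrow> 'a"
  tlb :: "'a \<Rightarrow> 'a"
  tc :: "'a \<Rightarrow> 'a set"

definition rooted_tree :: "'a btree \<Rightarrow> bool" where
  "rooted_tree T \<longleftrightarrow> finite (tverts T) \<and> troot T \<in> tverts T \<and>
     (\<forall>x \<in> tverts T - {troot T}. tpar T x \<in> tverts T) \<and>
     (\<forall>x \<in> tverts T. \<exists>n. (tpar T ^^ n) x = troot T \<and> (\<forall>i<n. (tpar T ^^ i) x \<noteq> troot T))"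

definition children :: "'a btree \<Rightarrow> 'a \<Rightarrow> 'a set" where
  "children T x = {y \<in> tverts T - {troot T}. tpar T y = x}"

definition is_leaf :: "'a btree \<Rightarrow> 'a \<Rightarrow> bool" where
  "is_leaf T x \<longleftrightarrow> children T x = {}"

definition is_last_born :: "'a btree \<Rightarrow> 'a \<Rightarrow> bool" where
  "is_last_born T y \<longleftrightarrow> (\<exists>x \<in> tverts T. \<not> is_leaf T x \<and> tlb T x = y)"

definition branch_set :: "'a btree \<Rightarrow> 'a \<Rightarrow> 'a set \<Rightarrow> bool" where
  "branch_set T x B \<longleftrightarrow> B = {} \<or>
     (\<exists>y n. y \<in> tverts T \<and> (tpar T ^^ n) y = x \<and> (\<forall>i<n. (tpar T ^^ i) y \<noteq> troot T) \<and>
        B = {(tpar T ^^ i) y | i. i \<le> n})"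

definition burling_tree :: "'a btree \<Rightarrow> bool" where
  "burling_tree T \<longleftrightarrow> rooted_tree T \<and>
     (\<forall>x \<in> tverts T. \<not> is_leaf T x \<longrightarrow> tlb T x \<in> children T x) \<and>
     (\<forall>x \<in> tverts T. (x = troot T \<or> is_last_born T x) \<longrightarrow> tc T x = {}) \<and>
     (\<forall>x \<in> tverts T. x \<noteq> troot T \<and> \<not> is_last_born T x \<longrightarrow>
         branch_set T (tlb T (tpar T x)) (tc T x))"

definition fd_arc :: "'a btree \<Rightarrow> 'a \<Rightarrow> 'a \<Rightarrow> bool" where
  "fd_arc T x y \<longleftrightarrow> x \<in> tverts T \<and> y \<in> tverts T \<and> y \<in> tc T x"

text \<open>The graph (V, A) is derived from T via the vertex embedding f: it is (via f) an
  induced subgraph of the fully derived graph. With f = id this is literally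
  "induced subgraph".\<close>

definition derived_via :: "('a \<Rightarrow> 'b) \<Rightarrow> 'b btree \<Rightarrow> 'a set \<Rightarrow> ('a \<times> 'a) set \<Rightarrow> bool" where
  "derived_via f T V A \<longleftrightarrow> inj_on f V \<and> f ` V \<subseteq> tverts T \<and> A \<subseteq> V \<times> V \<and>
     (\<forall>x \<in> V. \<forall>y \<in> V. (x, y) \<in> A \<longleftrightarrow> fd_arc T (f x) (f y))"

definition depth :: "'a btree \<Rightarrow> 'a \<Rightarrow> nat" where
  "depth T x = (LEAST n. (tpar T ^^ n) x = troot T)"

definition top_arc :: "('a \<Rightarrow> 'b) \<Rightarrow> 'b btree \<Rightarrow> ('a \<times> 'a) set \<Rightarrow> 'a \<Rightarrow> 'a \<Rightarrow> bool" where
  "top_arc f T A x y \<longleftrightarrow> (x, y) \<in> A \<and>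
     (\<forall>z. (x, z) \<in> A \<longrightarrow> depth T (f y) \<le> depth T (f z))"

definition bottom_arc :: "('a \<Rightarrow> 'b) \<Rightarrow> 'b btree \<Rightarrow> ('a \<times> 'a) set \<Rightarrow> 'a \<Rightarrow> 'a \<Rightarrow> bool" where
  "bottom_arc f T A x y \<longleftrightarrow> (x, y) \<in> A \<and>
     (\<forall>z. (x, z) \<in> A \<longrightarrow> depth T (f z) \<le> depth T (f y))"

end

theory Submission
  imports Defs
begin

text \<open>Put w where u was, and move u to a new leaf below v. Concretely, T' arises from T by
  inserting a new vertex mid between v and its children, making mid the last-born of v, adding
  a new leaf child of v that carries u, and letting w occupy the old node of u. Every branch
  through v is lengthened by mid, so the out-neighbourhoods of the old vertices stay branches,
  and along a branch the depth order is unchanged; this keeps all top and bottom arcs other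
  than uv. The vertex w keeps the part of the branch of u down to v, which meets V only in v
  because uv is a top arc, and additionally sees the new leaf u, one level below v. The leaf u
  is not last-born, so its branch may start at mid: it continues with the old branch of u
  below v. Since u is a source, no vertex has to see u.\<close>

lemma depth_eqI:
  assumes "(tpar T ^^ n) x = troot T" "\<forall>i<n. (tpar T ^^ i) x \<noteq> troot T"
  shows "depth T x = n"
  unfolding depth_def
proof (rule Least_equality)
  show "(tpar T ^^ n) x = troot T" by fact
  fix m assume "(tpar T ^^ m) x = troot T"
  then show "n \<le> m" using assms(2) by (meson not_le)
qed

lemma depth_troot [simp]: "depth T (troot T) = 0"
  by (rule depth_eqI) auto

lemma rooted_tree_by_height:
  assumes fin: "finite (tverts T)" and root: "troot T \<in> tverts T"
    and step: "\<And>x. x \<in> tverts T \<Longrightarrow> x \<noteq> troot T \<Longrightarrow>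
                    tpar T x \<in> tverts T \<and> ht x = Suc (ht (tpar T x))"
    and zero: "\<And>x. x \<in> tverts T \<Longrightarrow> ht x = 0 \<longleftrightarrow> x = troot T"
  shows "rooted_tree T" and "\<And>x. x \<in> tverts T \<Longrightarrow> depth T x = ht x"
proof -
  have path: "(tpar T ^^ n) x = troot T \<and> (\<forall>i<n. (tpar T ^^ i) x \<noteq> troot T)"
    if "x \<in> tverts T" "ht x = n" for x n
    using that
  proof (induction n arbitrary: x)
    case 0
    then show ?case using zero by simp
  next
    case (Suc m)
    then have x_ne_root: "x \<noteq> troot T" using zero[OF root] by auto
    then have "tpar T x \<in> tverts T" "ht (tpar T x) = m" using step Suc.prems by auto
    note IH = Suc.IH[OF this]
    show ?case
    proof (intro conjI allI impI)
      show "(tpar T ^^ Suc m) x = troot T" using IH by (simp only: funpow_Suc_right comp_apply)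
      fix i assume "i < Suc m"
      then show "(tpar T ^^ i) x \<noteq> troot T"
        using IH x_ne_root by (cases i) (auto simp only: funpow_Suc_right comp_apply funpow_0 Suc_less_eq)
    qed
  qed
  show "rooted_tree T"
    unfolding rooted_tree_def using fin root step path by blast
  show "depth T x = ht x" if "x \<in> tverts T" for x
    using path[OF that refl] by (intro depth_eqI) simp_all
qed

definition ancestors :: "'a btree \<Rightarrow> 'a \<Rightarrow> 'a set" where
  "ancestors T x = {(tpar T ^^ i) x | i. i \<le> depth T x}"

lemma funpow_tpar_in_ancestors: "i \<le> depth T x \<Longrightarrow> (tpar T ^^ i) x \<in> ancestors T x"
  unfolding ancestors_def by blast

lemma ancestors_troot [simp]: "ancestors T (troot T) = {troot T}"
  unfolding ancestors_def by auto

context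
  fixes T :: "'a btree"
  assumes rooted: "rooted_tree T"
begin

lemma troot_in_tverts: "troot T \<in> tverts T"
  using rooted unfolding rooted_tree_def by blast

lemma finite_tverts: "finite (tverts T)"
  using rooted unfolding rooted_tree_def by blast

lemma funpow_depth:
  assumes "x \<in> tverts T"
  shows "(tpar T ^^ depth T x) x = troot T" and "\<forall>i<depth T x. (tpar T ^^ i) x \<noteq> troot T"
proof -
  obtain n where n: "(tpar T ^^ n) x = troot T" "\<forall>i<n. (tpar T ^^ i) x \<noteq> troot T"
    using rooted assms unfolding rooted_tree_def by blast
  moreover from n have "depth T x = n" by (rule depth_eqI)
  ultimately show "(tpar T ^^ depth T x) x = troot T" "\<forall>i<depth T x. (tpar T ^^ i) x \<noteq> troot T"
    by auto
qed

lemma tpar_in_tverts: "x \<in> tverts T \<Longrightarrow> x \<noteq> troot T \<Longrightarrow> tpar T x \<in> tverts T"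
  using rooted unfolding rooted_tree_def by blast

lemma depth_tpar:
  assumes "x \<in> tverts T" "x \<noteq> troot T"
  shows "depth T x = Suc (depth T (tpar T x))"
proof -
  have "depth T x \<noteq> 0" using funpow_depth(1)[OF assms(1)] assms(2) by (metis funpow_0)
  then obtain k where k: "depth T x = Suc k" using not0_implies_Suc by blast
  have "depth T (tpar T x) = k"
  proof (rule depth_eqI)
    show "(tpar T ^^ k) (tpar T x) = troot T"
      using funpow_depth(1)[OF assms(1)] k by (simp only: funpow_Suc_right comp_apply)
    show "\<forall>i<k. (tpar T ^^ i) (tpar T x) \<noteq> troot T"
      using funpow_depth(2)[OF assms(1)] k by (metis Suc_less_eq funpow_Suc_right comp_apply)
  qed
  then show ?thesis using k by simp
qed

lemma depth_eq_0_iff: "x \<in> tverts T \<Longrightarrow> depth T x = 0 \<longleftrightarrow> x = troot T"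
  using depth_tpar by fastforce

lemma funpow_tpar_in_tverts:
  assumes "x \<in> tverts T" "i \<le> depth T x"
  shows "(tpar T ^^ i) x \<in> tverts T \<and> depth T ((tpar T ^^ i) x) = depth T x - i"
  using assms(2)
proof (induction i)
  case 0
  then show ?case using assms(1) by simp
next
  case (Suc i)
  then have IH: "(tpar T ^^ i) x \<in> tverts T" "depth T ((tpar T ^^ i) x) = depth T x - i"
    by auto
  have "(tpar T ^^ i) x \<noteq> troot T" using funpow_depth(2)[OF assms(1)] Suc.prems by auto
  then show ?case using IH tpar_in_tverts depth_tpar by auto
qed

lemma rooted_tree_induct [consumes 1, case_names root tpar]:
  assumes "x \<in> tverts T"
    and "P (troot T)"
    and "\<And>x. x \<in> tverts T \<Longrightarrow> x \<noteq> troot T \<Longrightarrow> P (tpar T x) \<Longrightarrow> P x"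
  shows "P x"
proof -
  have "P x" if "x \<in> tverts T" "depth T x = n" for x n
    using that
  proof (induction n arbitrary: x)
    case 0
    then show ?case using depth_eq_0_iff assms(2) by blast
  next
    case (Suc n)
    then have "x \<noteq> troot T" by auto
    then show ?case using Suc tpar_in_tverts depth_tpar assms(3) by auto
  qed
  then show ?thesis using assms(1) by blast
qed

lemma ancestors_tpar:
  assumes "x \<in> tverts T" "x \<noteq> troot T"
  shows "ancestors T x = insert x (ancestors T (tpar T x))"
proof -
  have image: "ancestors T y = (\<lambda>i. (tpar T ^^ i) y) ` {..depth T y}" for y
    unfolding ancestors_def by auto
  have "{..depth T x} = insert 0 (Suc ` {..depth T (tpar T x)})"
    using depth_tpar[OF assms] atMost_Suc_eq_insert_0 by simp
  then show ?thesis
    unfolding image by (simp add: image_image funpow_Suc_right del: funpow.simps)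
qed

lemma ancestors_facts:
  assumes "x \<in> tverts T"
  shows "x \<in> ancestors T x \<and> (\<forall>a\<in>ancestors T x. a \<in> tverts T \<and> depth T a \<le> depth T x \<and>
           (depth T a = depth T x \<longrightarrow> a = x))"
  using assms
proof (induction rule: rooted_tree_induct)
  case root
  then show ?case using troot_in_tverts by auto
next
  case (tpar x)
  then show ?case using ancestors_tpar[OF tpar.hyps] tpar_in_tverts[OF tpar.hyps] depth_tpar[OF tpar.hyps]
    by auto
qed

lemma ancestors_self: "x \<in> tverts T \<Longrightarrow> x \<in> ancestors T x"
  using ancestors_facts by blast

lemma ancestors_in_tverts: "x \<in> tverts T \<Longrightarrow> a \<in> ancestors T x \<Longrightarrow> a \<in> tverts T"
  using ancestors_facts by blast

lemma depth_ancestor_le: "x \<in> tverts T \<Longrightarrow> a \<in> ancestors T x \<Longrightarrow> depth T a \<le> depth T x"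
  using ancestors_facts by blast

lemma ancestor_eqI: "x \<in> tverts T \<Longrightarrow> a \<in> ancestors T x \<Longrightarrow> depth T a = depth T x \<Longrightarrow> a = x"
  using ancestors_facts by blast

lemma ancestors_trans:
  assumes "c \<in> tverts T" "b \<in> ancestors T c" "a \<in> ancestors T b"
  shows "a \<in> ancestors T c"
  using assms
proof (induction c rule: rooted_tree_induct)
  case root
  then show ?case by auto
next
  case (tpar x)
  then show ?case using ancestors_tpar by auto
qed

lemma ancestors_chain:
  assumes "y \<in> tverts T" "a \<in> ancestors T y" "b \<in> ancestors T y" "depth T a \<le> depth T b"
  shows "a \<in> ancestors T b"
  using assms
proof (induction y rule: rooted_tree_induct)
  case root
  then show ?case by auto
next
  case (tpar x)
  have x_anc: "ancestors T x = insert x (ancestors T (tpar T x))"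
    using ancestors_tpar tpar.hyps by blast
  have px: "tpar T x \<in> tverts T" "depth T x = Suc (depth T (tpar T x))"
    using tpar_in_tverts depth_tpar tpar.hyps by auto
  show ?case
  proof (cases "b = x")
    case True
    then show ?thesis using tpar.prems by simp
  next
    case False
    then have b: "b \<in> ancestors T (tpar T x)" using tpar.prems x_anc by auto
    show ?thesis
    proof (cases "a = x")
      case True
      then show ?thesis using depth_ancestor_le[OF px(1) b] px tpar.prems(3) by simp
    next
      case False
      then show ?thesis using tpar x_anc b by auto
    qed
  qed
qed

lemma branch_set_iff:
  "branch_set T s B \<longleftrightarrow> B = {} \<or>
     (\<exists>y\<in>tverts T. s \<in> ancestors T y \<and> B = {a \<in> ancestors T y. depth T s \<le> depth T a})"
proof -
  have segment: "{(tpar T ^^ i) y | i. i \<le> n} =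
      {a \<in> ancestors T y. depth T ((tpar T ^^ n) y) \<le> depth T a}"
    if y: "y \<in> tverts T" and n: "n \<le> depth T y" for y n
  proof -
    have depth_iter: "depth T ((tpar T ^^ i) y) = depth T y - i" if "i \<le> depth T y" for i
      using funpow_tpar_in_tverts[OF y that] by blast
    show ?thesis
    proof (intro equalityI subsetI)
      fix a assume "a \<in> {(tpar T ^^ i) y | i. i \<le> n}"
      then obtain i where i: "i \<le> n" "a = (tpar T ^^ i) y" by blast
      then have "i \<le> depth T y" using n by simp
      then have "a \<in> ancestors T y" "depth T a = depth T y - i"
        using funpow_tpar_in_ancestors depth_iter i(2) by simp_all
      moreover have "depth T ((tpar T ^^ n) y) = depth T y - n" using depth_iter[OF n] .
      ultimately show "a \<in> {a \<in> ancestors T y. depth T ((tpar T ^^ n) y) \<le> depth T a}"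
        using i(1) by simp
    next
      fix a assume a: "a \<in> {a \<in> ancestors T y. depth T ((tpar T ^^ n) y) \<le> depth T a}"
      then obtain i where i: "i \<le> depth T y" "a = (tpar T ^^ i) y"
        unfolding ancestors_def by blast
      have "depth T y - n \<le> depth T y - i" using a i depth_iter[OF n] depth_iter[OF i(1)] by simp
      then have "i \<le> n" using i(1) n by linarith
      then show "a \<in> {(tpar T ^^ i) y | i. i \<le> n}" using i(2) by blast
    qed
  qed
  show ?thesis
  proof
    assume "branch_set T s B"
    then consider "B = {}" | y n where "y \<in> tverts T" "(tpar T ^^ n) y = s"
        "\<forall>i<n. (tpar T ^^ i) y \<noteq> troot T" "B = {(tpar T ^^ i) y | i. i \<le> n}"
      unfolding branch_set_def by blast
    then show "B = {} \<or>
        (\<exists>y\<in>tverts T. s \<in> ancestors T y \<and> B = {a \<in> ancestors T y. depth T s \<le> depth T a})"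
    proof cases
      case (2 y n)
      have n: "n \<le> depth T y" using funpow_depth(1)[OF 2(1)] 2(3) by (meson not_le)
      then have "s \<in> ancestors T y" using funpow_tpar_in_ancestors[OF n] 2(2) by simp
      moreover have "B = {a \<in> ancestors T y. depth T s \<le> depth T a}"
        using segment[OF 2(1) n] 2(2,4) by simp
      ultimately show ?thesis using 2(1) by blast
    qed simp
  next
    assume "B = {} \<or>
        (\<exists>y\<in>tverts T. s \<in> ancestors T y \<and> B = {a \<in> ancestors T y. depth T s \<le> depth T a})"
    then consider "B = {}" | y where "y \<in> tverts T" "s \<in> ancestors T y"
        "B = {a \<in> ancestors T y. depth T s \<le> depth T a}"
      by blast
    then show "branch_set T s B"
    proof cases
      case (2 y)
      then obtain n where n: "n \<le> depth T y" "s = (tpar T ^^ n) y"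
        unfolding ancestors_def by blast
      have "(tpar T ^^ i) y \<noteq> troot T" if "i < n" for i
      proof -
        have "depth T ((tpar T ^^ i) y) \<noteq> 0" using funpow_tpar_in_tverts[OF 2(1), of i] n that by auto
        then show ?thesis by (metis depth_troot)
      qed
      moreover have "B = {(tpar T ^^ i) y | i. i \<le> n}" using segment[OF 2(1) n(1)] 2(3) n(2) by simp
      ultimately show ?thesis unfolding branch_set_def using 2(1) n(2) by blast
    qed (simp add: branch_set_def)
  qed
qed

end

locale top_subdivision =
  fixes T :: "'a btree" and V :: "'a set" and A :: "('a \<times> 'a) set" and u v w :: 'a
  assumes burling: "burling_tree T"
    and oriented: "oriented_graph V A"
    and derived: "derived_via id T V A"
    and top_uv: "top_arc id T A u v"
    and source_u: "is_source A u"
    and w_notin_V: "w \<notin> V"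
begin

abbreviation "Vt \<equiv> tverts T"
abbreviation "root \<equiv> troot T"
abbreviation "par \<equiv> tpar T"
abbreviation "lb \<equiv> tlb T"
abbreviation "c \<equiv> tc T"
abbreviation "h \<equiv> depth T"
abbreviation "anc \<equiv> ancestors T"

lemma rooted: "rooted_tree T"
  using burling unfolding burling_tree_def by blast

lemma V_subset: "V \<subseteq> Vt"
  using derived unfolding derived_via_def by auto

lemma arc_in_V: "(x, y) \<in> A \<Longrightarrow> x \<in> V \<and> y \<in> V"
  using derived unfolding derived_via_def by auto

lemma arc_iff: "x \<in> V \<Longrightarrow> y \<in> V \<Longrightarrow> (x, y) \<in> A \<longleftrightarrow> y \<in> c x"
  using derived V_subset unfolding derived_via_def fd_arc_def by auto

lemma uv_arc: "(u, v) \<in> A"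
  using top_uv unfolding top_arc_def by blast

lemma u_in_V: "u \<in> V" and v_in_V: "v \<in> V"
  using uv_arc arc_in_V by auto

lemma u_in_Vt: "u \<in> Vt" and v_in_Vt: "v \<in> Vt"
  using u_in_V v_in_V V_subset by auto

lemma u_ne_v: "u \<noteq> v"
  using oriented uv_arc unfolding oriented_graph_def by blast

lemma u_ne_w: "u \<noteq> w"
  using u_in_V w_notin_V by auto

lemma v_in_c_u: "v \<in> c u"
  using arc_iff u_in_V v_in_V uv_arc by blast

lemma u_notin_c: "x \<in> V \<Longrightarrow> u \<notin> c x"
  using source_u arc_iff u_in_V unfolding is_source_def by blast

lemma depth_v_le_out_neighbour_of_u: "y \<in> V \<Longrightarrow> y \<in> c u \<Longrightarrow> h v \<le> h y"
  using top_uv arc_iff[OF u_in_V] unfolding top_arc_def by auto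

lemma lb_in_children: "x \<in> Vt \<Longrightarrow> \<not> is_leaf T x \<Longrightarrow> lb x \<in> children T x"
  using burling unfolding burling_tree_def by blast

lemma c_empty: "x \<in> Vt \<Longrightarrow> x = root \<or> is_last_born T x \<Longrightarrow> c x = {}"
  using burling unfolding burling_tree_def by blast

lemma c_branch:
  assumes "x \<in> Vt" "c x \<noteq> {}"
  obtains y where "y \<in> Vt" "lb (par x) \<in> anc y" "c x = {a \<in> anc y. h (lb (par x)) \<le> h a}"
proof -
  have "x \<noteq> root" "\<not> is_last_born T x" using c_empty assms by blast+
  then have "branch_set T (lb (par x)) (c x)"
    using burling assms(1) unfolding burling_tree_def by blast
  then show ?thesis using that assms(2) unfolding branch_set_iff[OF rooted] by blast
qed

lemma c_u_branch:
  obtains y where "y \<in> Vt" "v \<in> anc y" "lb (par u) \<in> anc y" "h (lb (par u)) \<le> h v"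
    "c u = {a \<in> anc y. h (lb (par u)) \<le> h a}"
proof -
  obtain y where "y \<in> Vt" "lb (par u) \<in> anc y" "c u = {a \<in> anc y. h (lb (par u)) \<le> h a}"
    using c_branch[OF u_in_Vt] v_in_c_u by blast
  then show ?thesis using that v_in_c_u by blast
qed

definition below_v :: "'a \<Rightarrow> bool" where
  "below_v z \<longleftrightarrow> v \<in> anc z \<and> z \<noteq> v"

definition crosses_v :: "'a \<Rightarrow> bool" where
  "crosses_v x \<longleftrightarrow> v \<in> c x \<and> (\<exists>z\<in>c x. below_v z)"

lemma not_below_v_root: "\<not> below_v root"
  unfolding below_v_def by auto

lemma not_below_v_v: "\<not> below_v v"
  unfolding below_v_def by auto

lemma below_v_tpar:
  assumes "x \<in> Vt" "x \<noteq> root"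
  shows "below_v x \<longleftrightarrow> par x = v \<or> below_v (par x)"
proof -
  have x_anc: "anc x = insert x (anc (par x))" using ancestors_tpar[OF rooted assms] .
  have par_x: "h x = Suc (h (par x))" "par x \<in> Vt"
    using depth_tpar[OF rooted assms] tpar_in_tverts[OF rooted assms] by auto
  show ?thesis
  proof (cases "x = v")
    case True
    have "v \<notin> anc (par x)"
      using depth_ancestor_le[OF rooted par_x(2), of v] par_x(1) True by auto
    then show ?thesis unfolding below_v_def using True par_x(1) by auto
  next
    case False
    then show ?thesis
      unfolding below_v_def using x_anc ancestors_self[OF rooted par_x(2)] by auto
  qed
qed

lemma below_v_mono:
  assumes "b \<in> Vt" "a \<in> anc b" "below_v a"
  shows "below_v b"
proof -
  have v: "v \<in> anc a" "a \<noteq> v" using assms(3) unfolding below_v_def by simp_all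
  have "a \<in> Vt" using ancestors_in_tverts[OF rooted assms(1,2)] .
  then have "h v \<le> h a" using depth_ancestor_le[OF rooted _ v(1)] by blast
  moreover have "h a \<le> h b" using depth_ancestor_le[OF rooted assms(1,2)] .
  ultimately have "b \<noteq> v" using ancestor_eqI[OF rooted assms(1,2)] v(2) by auto
  then show ?thesis
    unfolding below_v_def using ancestors_trans[OF rooted assms(1,2) v(1)] by simp
qed

lemma not_below_v_ancestor: "a \<in> anc v \<Longrightarrow> \<not> below_v a"
  using below_v_mono[OF v_in_Vt] not_below_v_v by blast

lemma below_v_iff_deeper:
  assumes "y \<in> Vt" "s \<in> anc y" "v \<in> anc y"
  shows "below_v s \<longleftrightarrow> h v < h s"
proof
  assume "below_v s"
  then have v: "v \<in> anc s" "s \<noteq> v" unfolding below_v_def by auto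
  have "s \<in> Vt" using ancestors_in_tverts[OF rooted assms(1,2)] .
  then have "h v \<le> h s" "h v = h s \<Longrightarrow> v = s"
    using depth_ancestor_le[OF rooted _ v(1)] ancestor_eqI[OF rooted _ v(1)] by auto
  then show "h v < h s" using v(2) le_neq_implies_less by blast
next
  assume "h v < h s"
  then show "below_v s" unfolding below_v_def using ancestors_chain[OF rooted assms(1,3,2)] by auto
qed

text \<open>A graph vertex x sits at the node Inl x of T'. Hence emb, which carries the nodes of T
  into T', sends the node of u to Inl w, and renames a node of T that happens to be called w
  (it is not in V) to Inr 0.\<close>

definition emb :: "'a \<Rightarrow> 'a + nat" where
  "emb x = (if x = w then Inr 0 else if x = u then Inl w else Inl x)"

definition emb_inv :: "'a + nat \<Rightarrow> 'a" where
  "emb_inv y = (case y of Inl a \<Rightarrow> if a = w then u else a | Inr _ \<Rightarrow> w)"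

definition mid :: "'a + nat" where
  "mid = Inr 1"

definition u_leaf :: "'a + nat" where
  "u_leaf = Inl u"

definition par' :: "'a + nat \<Rightarrow> 'a + nat" where
  "par' y = (if y = u_leaf \<or> y = mid then emb v
     else if par (emb_inv y) = v then mid else emb (par (emb_inv y)))"

definition lb' :: "'a + nat \<Rightarrow> 'a + nat" where
  "lb' y = (if y = emb v then mid else if y = mid then emb (lb v) else emb (lb (emb_inv y)))"

definition c' :: "'a + nat \<Rightarrow> ('a + nat) set" where
  "c' y = (if y = mid then {}
     else if y = u_leaf then insert mid (emb ` {z \<in> c u. below_v z})
     else if y = emb u then insert u_leaf (emb ` {z \<in> c u. h z \<le> h v})
     else emb ` c (emb_inv y) \<union> (if crosses_v (emb_inv y) then {mid} else {}))"

definition T' :: "('a + nat) btree" where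
  "T' = \<lparr>tverts = insert u_leaf (insert mid (emb ` Vt)), troot = emb root,
     tpar = par', tlb = lb', tc = c'\<rparr>"

definition ht' :: "'a + nat \<Rightarrow> nat" where
  "ht' y = (if y = u_leaf \<or> y = mid then Suc (h v)
     else h (emb_inv y) + (if below_v (emb_inv y) then 1 else 0))"

lemma emb_inv_emb [simp]: "emb_inv (emb x) = x"
  using u_ne_w by (simp add: emb_def emb_inv_def)

lemma emb_eq_iff [simp]: "emb x = emb y \<longleftrightarrow> x = y"
  by (metis emb_inv_emb)

lemma new_vertices_distinct [simp]:
  "emb x \<noteq> mid" "emb x \<noteq> u_leaf" "mid \<noteq> u_leaf"
  "mid \<noteq> emb x" "u_leaf \<noteq> emb x" "u_leaf \<noteq> mid"
  using u_ne_w by (auto simp: emb_def mid_def u_leaf_def)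

lemma Inl_eq_emb: "x \<in> V \<Longrightarrow> x \<noteq> u \<Longrightarrow> Inl x = emb x"
  using w_notin_V by (auto simp: emb_def)

lemma emb_u: "emb u = Inl w"
  using u_ne_w by (simp add: emb_def)

lemma T'_simps [simp]:
  "tverts T' = insert u_leaf (insert mid (emb ` Vt))" "troot T' = emb root"
  "tpar T' = par'" "tlb T' = lb'" "tc T' = c'"
  by (simp_all add: T'_def)

lemma par'_simps [simp]:
  "par' u_leaf = emb v" "par' mid = emb v" "par' (emb x) = (if par x = v then mid else emb (par x))"
  by (simp_all add: par'_def)

lemma ht'_simps [simp]:
  "ht' u_leaf = Suc (h v)" "ht' mid = Suc (h v)"
  "ht' (emb x) = h x + (if below_v x then 1 else 0)"
  by (simp_all add: ht'_def)

lemma lb'_simps [simp]: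
  "lb' (emb v) = mid" "lb' mid = emb (lb v)" "x \<noteq> v \<Longrightarrow> lb' (emb x) = emb (lb x)"
  by (simp_all add: lb'_def)

lemma c'_simps [simp]:
  "c' mid = {}" "c' u_leaf = insert mid (emb ` {z \<in> c u. below_v z})"
  "c' (emb u) = insert u_leaf (emb ` {z \<in> c u. h z \<le> h v})"
  "x \<noteq> u \<Longrightarrow> c' (emb x) = emb ` c x \<union> (if crosses_v x then {mid} else {})"
  by (simp_all add: c'_def)

lemma tverts_T'_cases:
  assumes "y \<in> tverts T'"
  obtains "y = u_leaf" | "y = mid" | x where "x \<in> Vt" "y = emb x"
  using assms by auto

lemma T'_rooted_and_depth:
  shows "rooted_tree T'" and "\<And>y. y \<in> tverts T' \<Longrightarrow> depth T' y = ht' y"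
proof -
  have step: "tpar T' y \<in> tverts T' \<and> ht' y = Suc (ht' (tpar T' y))"
    if y: "y \<in> tverts T'" "y \<noteq> troot T'" for y
  proof (cases rule: tverts_T'_cases[OF y(1)])
    case (3 x)
    then have "x \<noteq> root" using y by simp
    then show ?thesis using 3 below_v_tpar depth_tpar[OF rooted] tpar_in_tverts[OF rooted]
      by (auto simp: not_below_v_v)
  qed (use v_in_Vt not_below_v_v in simp_all)
  have zero: "ht' y = 0 \<longleftrightarrow> y = troot T'" if "y \<in> tverts T'" for y
    using that depth_eq_0_iff[OF rooted] not_below_v_root by (cases rule: tverts_T'_cases) auto
  have "finite (tverts T')" "troot T' \<in> tverts T'"
    using finite_tverts[OF rooted] troot_in_tverts[OF rooted] by simp_all
  then show "rooted_tree T'" "\<And>y. y \<in> tverts T' \<Longrightarrow> depth T' y = ht' y"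
    using rooted_tree_by_height[of T' ht'] step zero by blast+
qed

lemmas rooted' = T'_rooted_and_depth(1)

lemma depth'_simps:
  "depth T' u_leaf = Suc (h v)" "depth T' mid = Suc (h v)"
  "x \<in> Vt \<Longrightarrow> depth T' (emb x) = h x + (if below_v x then 1 else 0)"
  using T'_rooted_and_depth(2) by simp_all

lemma ancestors'_mid: "ancestors T' mid = insert mid (ancestors T' (emb v))"
  using ancestors_tpar[OF rooted'] v_in_Vt by simp

lemma ancestors'_u_leaf: "ancestors T' u_leaf = insert u_leaf (ancestors T' (emb v))"
  using ancestors_tpar[OF rooted'] v_in_Vt by simp

lemma ancestors'_emb:
  assumes "x \<in> Vt"
  shows "ancestors T' (emb x) = emb ` anc x \<union> (if below_v x then {mid} else {})"
  using assms
proof (induction x rule: rooted_tree_induct[OF rooted, consumes 1, case_names root tpar])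
  case root
  then show ?case using not_below_v_root ancestors_troot[of T'] by simp
next
  case (tpar x)
  have "ancestors T' (emb x) = insert (emb x) (ancestors T' (par' (emb x)))"
    using ancestors_tpar[OF rooted', of "emb x"] tpar.hyps by simp
  moreover have "anc x = insert x (anc (par x))" using ancestors_tpar[OF rooted tpar.hyps] .
  ultimately show ?case
    using tpar.IH below_v_tpar[OF tpar.hyps] ancestors'_mid not_below_v_v
    by (cases "par x = v") auto
qed

lemma ancestors'_v: "ancestors T' (emb v) = emb ` anc v"
  using ancestors'_emb[OF v_in_Vt] not_below_v_v by simp

lemma children'_emb_v: "children T' (emb v) = {mid, u_leaf}"
  unfolding children_def by (auto simp: par'_def)

lemma children'_u_leaf: "children T' u_leaf = {}"
  unfolding children_def by (auto simp: par'_def)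

lemma children'_mid: "children T' mid = emb ` children T v"
  unfolding children_def by (auto simp: par'_def)

lemma children'_emb: "x \<noteq> v \<Longrightarrow> children T' (emb x) = emb ` children T x"
  unfolding children_def by (auto simp: par'_def)

lemma is_leaf'_simps:
  "is_leaf T' u_leaf" "is_leaf T' mid \<longleftrightarrow> is_leaf T v"
  "x \<noteq> v \<Longrightarrow> is_leaf T' (emb x) \<longleftrightarrow> is_leaf T x"
  unfolding is_leaf_def using children'_u_leaf children'_mid children'_emb by simp_all

lemma not_is_last_born'_u_leaf: "\<not> is_last_born T' u_leaf"
  unfolding is_last_born_def using is_leaf'_simps(1) by (auto simp: lb'_def)

lemma is_last_born'_emb:
  assumes "x \<in> Vt"
  shows "is_last_born T' (emb x) \<longleftrightarrow> is_last_born T x"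
proof
  assume "is_last_born T' (emb x)"
  then obtain y where y: "y \<in> tverts T'" "\<not> is_leaf T' y" "lb' y = emb x"
    unfolding is_last_born_def T'_simps by blast
  then show "is_last_born T x"
  proof (cases rule: tverts_T'_cases)
    case 2
    then have "\<not> is_leaf T v" "lb v = x" using y is_leaf'_simps(2) by simp_all
    then show ?thesis unfolding is_last_born_def using v_in_Vt by blast
  next
    case (3 z)
    then have "z \<noteq> v" using y by auto
    then have "\<not> is_leaf T z" "lb z = x" using y 3 is_leaf'_simps(3) by simp_all
    then show ?thesis unfolding is_last_born_def using 3 by blast
  qed (use y is_leaf'_simps(1) in simp)
next
  assume "is_last_born T x"
  then obtain z where z: "z \<in> Vt" "\<not> is_leaf T z" "lb z = x"
    unfolding is_last_born_def by auto
  show "is_last_born T' (emb x)"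
  proof (cases "z = v")
    case True
    then have "mid \<in> tverts T'" "\<not> is_leaf T' mid" "lb' mid = emb x"
      using z is_leaf'_simps(2) by simp_all
    then show ?thesis unfolding is_last_born_def by (simp only: T'_simps) blast
  next
    case False
    then have "emb z \<in> tverts T'" "\<not> is_leaf T' (emb z)" "lb' (emb z) = emb x"
      using z is_leaf'_simps(3) by simp_all
    then show ?thesis unfolding is_last_born_def by (simp only: T'_simps) blast
  qed
qed

lemma lb'_par'_emb: "lb' (par' (emb x)) = emb (lb (par x))"
  by (cases "par x = v") simp_all

lemma depth'_le_iff_on_chain:
  assumes "y \<in> Vt" "s \<in> anc y" "a \<in> anc y"
  shows "h s + (if below_v s then 1 else 0) \<le> h a + (if below_v a then 1 else 0) \<longleftrightarrow> h s \<le> h a"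
proof
  assume "h s \<le> h a"
  then have "s \<in> anc a" using ancestors_chain[OF rooted assms] by simp
  then have "below_v s \<Longrightarrow> below_v a" using below_v_mono ancestors_in_tverts[OF rooted assms(1,3)] by blast
  then show "h s + (if below_v s then 1 else 0) \<le> h a + (if below_v a then 1 else 0)"
    using \<open>h s \<le> h a\<close> by auto
next
  assume le: "h s + (if below_v s then 1 else 0) \<le> h a + (if below_v a then 1 else 0)"
  show "h s \<le> h a"
  proof (rule ccontr)
    assume "\<not> h s \<le> h a"
    then have "a \<in> anc s" using ancestors_chain[OF rooted assms(1,3,2)] by simp
    then have "below_v a \<Longrightarrow> below_v s" using below_v_mono ancestors_in_tverts[OF rooted assms(1,2)] by blast
    then show False using le \<open>\<not> h s \<le> h a\<close> by (auto split: if_splits)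
  qed
qed

lemma crosses_v_iff_branch:
  assumes y: "y \<in> Vt" "s \<in> anc y" "c x = {a \<in> anc y. h s \<le> h a}"
  shows "crosses_v x \<longleftrightarrow> below_v y \<and> h s + (if below_v s then 1 else 0) \<le> Suc (h v)"
proof -
  have "y \<in> c x"
    using y ancestors_self[OF rooted y(1)] depth_ancestor_le[OF rooted y(1,2)] by simp
  then have below_in_c: "(\<exists>z\<in>c x. below_v z) \<longleftrightarrow> below_v y"
    using y(3) below_v_mono[OF y(1)] by blast
  show ?thesis
  proof (cases "below_v y")
    case True
    then have v_anc: "v \<in> anc y" unfolding below_v_def by simp
    then have "v \<in> c x \<longleftrightarrow> h s \<le> h v" using y(3) by simp
    moreover have "h s \<le> h v \<longleftrightarrow> h s + (if below_v s then 1 else 0) \<le> Suc (h v)"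
      using below_v_iff_deeper[OF y(1,2) v_anc] by auto
    ultimately show ?thesis unfolding crosses_v_def using below_in_c True by simp
  qed (simp add: crosses_v_def below_in_c)
qed

lemma branch_set'_emb:
  assumes x: "x \<in> Vt" "x \<noteq> u" "c x \<noteq> {}"
  shows "branch_set T' (emb (lb (par x))) (c' (emb x))"
proof -
  define s where "s = lb (par x)"
  obtain y where y: "y \<in> Vt" "s \<in> anc y" "c x = {a \<in> anc y. h s \<le> h a}"
    using c_branch[OF x(1,3)] unfolding s_def by metis
  have depth'_anc: "depth T' (emb a) = h a + (if below_v a then 1 else 0)" if "a \<in> anc y" for a
    using depth'_simps(3) ancestors_in_tverts[OF rooted y(1) that] by blast
  have "{a' \<in> ancestors T' (emb y). depth T' (emb s) \<le> depth T' a'} =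
      emb ` {a \<in> anc y. h s + (if below_v s then 1 else 0) \<le> h a + (if below_v a then 1 else 0)}
      \<union> (if below_v y \<and> h s + (if below_v s then 1 else 0) \<le> Suc (h v) then {mid} else {})"
    unfolding ancestors'_emb[OF y(1)] using depth'_anc[OF y(2)] depth'_anc depth'_simps(2)
    by (auto split: if_splits)
  also have "\<dots> = emb ` {a \<in> anc y. h s \<le> h a} \<union> (if crosses_v x then {mid} else {})"
  proof -
    have "{a \<in> anc y. h s + (if below_v s then 1 else 0) \<le> h a + (if below_v a then 1 else 0)} =
        {a \<in> anc y. h s \<le> h a}"
      using depth'_le_iff_on_chain[OF y(1,2)] by blast
    then show ?thesis by (simp only: crosses_v_iff_branch[OF y])
  qed
  also have "\<dots> = c' (emb x)" using y(3) x(2) by simp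
  finally have "c' (emb x) = {a' \<in> ancestors T' (emb y). depth T' (emb s) \<le> depth T' a'}" ..
  moreover have "emb s \<in> ancestors T' (emb y)" using ancestors'_emb[OF y(1)] y(2) by simp
  ultimately show ?thesis
    unfolding s_def[symmetric] branch_set_iff[OF rooted'] using y(1) by auto
qed

lemma branch_set'_u_leaf: "branch_set T' mid (c' u_leaf)"
proof -
  obtain y where y: "y \<in> Vt" "v \<in> anc y" "lb (par u) \<in> anc y" "h (lb (par u)) \<le> h v"
    "c u = {a \<in> anc y. h (lb (par u)) \<le> h a}"
    using c_u_branch by blast
  have below_iff: "below_v a \<longleftrightarrow> h v < h a" if "a \<in> anc y" for a
    using below_v_iff_deeper[OF y(1) that y(2)] .
  have below_in_c_u: "{z \<in> c u. below_v z} = {a \<in> anc y. below_v a}"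
    using y(4,5) below_iff by auto
  show ?thesis
  proof (cases "below_v y")
    case True
    have depth'_anc: "depth T' (emb a) = h a + (if below_v a then 1 else 0)" if "a \<in> anc y" for a
      using depth'_simps(3) ancestors_in_tverts[OF rooted y(1) that] by blast
    have "Suc (h v) \<le> h a + (if below_v a then 1 else 0) \<longleftrightarrow> below_v a" if "a \<in> anc y" for a
      using below_iff[OF that] by auto
    then have "{a' \<in> ancestors T' (emb y). depth T' mid \<le> depth T' a'} =
        insert mid (emb ` {a \<in> anc y. below_v a})"
      unfolding ancestors'_emb[OF y(1)] using True depth'_anc depth'_simps(2) by force
    moreover have "mid \<in> ancestors T' (emb y)" using ancestors'_emb[OF y(1)] True by simp
    ultimately show ?thesis unfolding branch_set_iff[OF rooted'] using below_in_c_u y(1)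
      by (intro disjI2 bexI[of _ "emb y"]) auto
  next
    case False
    then have "y = v" using y(2) unfolding below_v_def by simp
    then have "{z \<in> c u. below_v z} = {}" using below_in_c_u not_below_v_ancestor by auto
    moreover have "depth T' (emb a) = h a" "h a \<le> h v" if "a \<in> anc v" for a
      using depth'_simps(3) ancestors_in_tverts[OF rooted v_in_Vt that] not_below_v_ancestor[OF that]
        depth_ancestor_le[OF rooted v_in_Vt that] by simp_all
    then have "{a' \<in> ancestors T' mid. depth T' mid \<le> depth T' a'} = {mid}"
      unfolding ancestors'_mid ancestors'_v using depth'_simps(2) by fastforce
    ultimately show ?thesis
      unfolding branch_set_iff[OF rooted'] using ancestors'_mid by auto
  qed
qed

lemma branch_set'_emb_u: "branch_set T' (emb (lb (par u))) (c' (emb u))"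
proof -
  define s where "s = lb (par u)"
  obtain y where y: "y \<in> Vt" "v \<in> anc y" "s \<in> anc y" "h s \<le> h v" "c u = {a \<in> anc y. h s \<le> h a}"
    using c_u_branch unfolding s_def by blast
  have s_anc: "s \<in> anc v" using ancestors_chain[OF rooted y(1,3,2,4)] .
  have depth'_anc: "depth T' (emb a) = h a" if "a \<in> anc v" for a
    using depth'_simps(3) ancestors_in_tverts[OF rooted v_in_Vt that] not_below_v_ancestor[OF that]
    by simp
  have "{z \<in> c u. h z \<le> h v} = {a \<in> anc v. h s \<le> h a}"
    using y(5) ancestors_chain[OF rooted y(1) _ y(2)] ancestors_trans[OF rooted y(1,2)]
      depth_ancestor_le[OF rooted v_in_Vt] by auto
  moreover have "{a' \<in> ancestors T' u_leaf. depth T' (emb s) \<le> depth T' a'} =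
      insert u_leaf (emb ` {a \<in> anc v. h s \<le> h a})"
    unfolding ancestors'_u_leaf ancestors'_v depth'_anc[OF s_anc]
    using depth'_anc y(4) depth'_simps(1) by auto
  moreover have "emb s \<in> ancestors T' u_leaf" using ancestors'_u_leaf ancestors'_v s_anc by simp
  ultimately show ?thesis
    unfolding s_def[symmetric] branch_set_iff[OF rooted'] by auto
qed

lemma lb'_in_children':
  assumes y: "y \<in> tverts T'" and not_leaf: "\<not> is_leaf T' y"
  shows "lb' y \<in> children T' y"
proof (cases rule: tverts_T'_cases[OF y])
  case 1
  then show ?thesis using not_leaf is_leaf'_simps(1) by simp
next
  case 2
  then show ?thesis
    using lb_in_children[OF v_in_Vt] not_leaf is_leaf'_simps(2) children'_mid by simp
next
  case (3 x)
  show ?thesis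
  proof (cases "x = v")
    case True
    then show ?thesis using 3 children'_emb_v by simp
  next
    case False
    then have "lb x \<in> children T x"
      using lb_in_children 3 not_leaf is_leaf'_simps(3) by simp
    then show ?thesis using 3 False children'_emb by simp
  qed
qed

lemma c'_empty:
  assumes y: "y \<in> tverts T'" and root_or_lb: "y = emb root \<or> is_last_born T' y"
  shows "c' y = {}"
proof (cases rule: tverts_T'_cases[OF y])
  case 1
  then show ?thesis using root_or_lb not_is_last_born'_u_leaf by simp
next
  case 2
  then show ?thesis by simp
next
  case (3 x)
  then have "c x = {}" using c_empty root_or_lb is_last_born'_emb by auto
  moreover from this have "x \<noteq> u" using v_in_c_u by auto
  ultimately show ?thesis using 3 by (simp add: crosses_v_def)
qed

lemma branch_set'_c':
  assumes y: "y \<in> tverts T'"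
  shows "branch_set T' (lb' (par' y)) (c' y)"
proof (cases rule: tverts_T'_cases[OF y])
  case 1
  then show ?thesis using branch_set'_u_leaf by simp
next
  case 2
  then show ?thesis by (simp add: branch_set_def)
next
  case (3 x)
  then have lb: "lb' (par' y) = emb (lb (par x))" using lb'_par'_emb by simp
  consider (u) "x = u" | (empty) "x \<noteq> u" "c x = {}" | (nonempty) "x \<noteq> u" "c x \<noteq> {}"
    by blast
  then show ?thesis
  proof cases
    case u
    then show ?thesis using branch_set'_emb_u lb 3 by simp
  next
    case empty
    then show ?thesis using 3 by (simp add: crosses_v_def branch_set_def)
  next
    case nonempty
    then show ?thesis using branch_set'_emb[OF 3(1) nonempty] lb 3 by simp
  qed
qed

lemma burling_tree': "burling_tree T'"
  unfolding burling_tree_def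
  using rooted' lb'_in_children' c'_empty branch_set'_c' by simp

abbreviation "V' \<equiv> top_subdiv_vertices V w"
abbreviation "A' \<equiv> top_subdiv_arcs A u v w"

lemma arc'_iff: "(x, y) \<in> A' \<longleftrightarrow> (x, y) \<in> A \<and> (x, y) \<noteq> (u, v) \<or> x = w \<and> (y = v \<or> y = u)"
  unfolding top_subdiv_arcs_def by auto

lemma no_arc_from_w: "(w, y) \<notin> A"
  using arc_in_V w_notin_V by blast

lemma out_neighbour_of_u:
  assumes "y \<in> V" "y \<in> c u"
  shows "below_v y \<longleftrightarrow> y \<noteq> v" and "h y \<le> h v \<longleftrightarrow> y = v"
proof -
  obtain b where b: "b \<in> Vt" "v \<in> anc b" "c u = {a \<in> anc b. h (lb (par u)) \<le> h a}"
    using c_u_branch by blast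
  have y_anc: "y \<in> anc b" using assms(2) b(3) by simp
  have "h v \<le> h y" using depth_v_le_out_neighbour_of_u assms .
  moreover have "h y = h v \<longleftrightarrow> y = v"
    using ancestors_chain[OF rooted b(1) y_anc b(2)] ancestor_eqI[OF rooted v_in_Vt] by auto
  moreover have "below_v y \<longleftrightarrow> h v < h y" using below_v_iff_deeper[OF b(1) y_anc b(2)] .
  ultimately show "below_v y \<longleftrightarrow> y \<noteq> v" "h y \<le> h v \<longleftrightarrow> y = v" by auto
qed

lemma V'_cases:
  assumes "x \<in> V'"
  obtains "x = w" | "x = u" | "x \<in> V" "x \<noteq> u" "x \<noteq> w"
  using assms w_notin_V unfolding top_subdiv_vertices_def by auto

lemma Inl_in_tverts':
  assumes "x \<in> V'"
  shows "Inl x \<in> tverts T'"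
  using assms
proof (cases rule: V'_cases)
  case 1
  then show ?thesis using emb_u u_in_Vt by (metis T'_simps(1) image_eqI insertI2)
next
  case 2
  then show ?thesis by (simp add: u_leaf_def)
next
  case 3
  then show ?thesis using Inl_eq_emb V_subset by auto
qed

lemma emb_in_emb_image_iff [simp]: "emb x \<in> emb ` S \<longleftrightarrow> x \<in> S"
  by (auto simp: image_iff)

lemma Inl_in_emb_image:
  assumes "y \<in> V'"
  shows "Inl y \<in> emb ` S \<longleftrightarrow> y = w \<and> u \<in> S \<or> y \<in> V \<and> y \<noteq> u \<and> y \<in> S"
  using assms
proof (cases rule: V'_cases)
  case 1
  then show ?thesis using emb_u w_notin_V by (metis emb_in_emb_image_iff)
next
  case 2
  have "u_leaf \<notin> emb ` S" by auto
  then show ?thesis using 2 u_ne_w by (simp add: u_leaf_def)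
next
  case 3
  then show ?thesis using Inl_eq_emb by simp
qed

lemma out_arcs'_w:
  assumes "y \<in> V'"
  shows "Inl y \<in> c' (Inl w) \<longleftrightarrow> y = u \<or> y = v"
proof -
  have "Inl y \<in> c' (Inl w) \<longleftrightarrow> y = u \<or> Inl y \<in> emb ` {z \<in> c u. h z \<le> h v}"
    by (simp add: emb_u[symmetric] u_leaf_def)
  also have "\<dots> \<longleftrightarrow> y = u \<or> y \<in> V \<and> y \<in> c u \<and> h y \<le> h v"
    using Inl_in_emb_image[OF assms] u_notin_c[OF u_in_V] by auto
  also have "\<dots> \<longleftrightarrow> y = u \<or> y = v"
    using out_neighbour_of_u(2) v_in_c_u v_in_V by auto
  finally show ?thesis .
qed

lemma out_arcs'_u:
  assumes "y \<in> V'"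
  shows "Inl y \<in> c' (Inl u) \<longleftrightarrow> (u, y) \<in> A \<and> y \<noteq> v"
proof -
  have "Inl y \<in> c' (Inl u) \<longleftrightarrow> Inl y \<in> emb ` {z \<in> c u. below_v z}"
    by (simp add: u_leaf_def[symmetric] mid_def)
  also have "\<dots> \<longleftrightarrow> y \<in> V \<and> y \<in> c u \<and> below_v y"
    using Inl_in_emb_image[OF assms] u_notin_c[OF u_in_V] by auto
  also have "\<dots> \<longleftrightarrow> y \<in> V \<and> y \<in> c u \<and> y \<noteq> v"
    using out_neighbour_of_u(1) by auto
  also have "\<dots> \<longleftrightarrow> (u, y) \<in> A \<and> y \<noteq> v"
    using arc_iff[OF u_in_V] arc_in_V by auto
  finally show ?thesis .
qed

lemma out_arcs'_old:
  assumes "x \<in> V" "x \<noteq> u" "y \<in> V'"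
  shows "Inl y \<in> c' (Inl x) \<longleftrightarrow> (x, y) \<in> A"
proof -
  have "Inl y \<in> c' (Inl x) \<longleftrightarrow> Inl y \<in> emb ` c x"
    by (simp add: Inl_eq_emb[OF assms(1,2)] assms(2) mid_def)
  also have "\<dots> \<longleftrightarrow> y \<in> V \<and> y \<in> c x"
    using Inl_in_emb_image[OF assms(3)] u_notin_c[OF assms(1)] by auto
  also have "\<dots> \<longleftrightarrow> (x, y) \<in> A"
    using arc_iff[OF assms(1)] arc_in_V by auto
  finally show ?thesis .
qed

lemma arcs'_iff:
  assumes "x \<in> V'" "y \<in> V'"
  shows "(x, y) \<in> A' \<longleftrightarrow> Inl y \<in> c' (Inl x)"
proof -
  from assms(1) show ?thesis
  proof (cases rule: V'_cases)
    case 1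
    then show ?thesis using out_arcs'_w[OF assms(2)] arc'_iff no_arc_from_w by auto
  next
    case 2
    then show ?thesis using out_arcs'_u[OF assms(2)] arc'_iff u_ne_w by auto
  next
    case 3
    then show ?thesis using out_arcs'_old[OF 3(1,2) assms(2)] arc'_iff by auto
  qed
qed

lemma arcs'_subset: "A' \<subseteq> V' \<times> V'"
proof (rule subrelI)
  fix x y assume "(x, y) \<in> A'"
  then show "(x, y) \<in> V' \<times> V'"
    using arc'_iff arc_in_V u_in_V v_in_V unfolding top_subdiv_vertices_def by auto
qed

lemma derived_via': "derived_via Inl T' V' A'"
  unfolding derived_via_def
proof (intro conjI ballI)
  show "inj_on Inl V'" by simp
  show "Inl ` V' \<subseteq> tverts T'" using Inl_in_tverts' by blast
  show "A' \<subseteq> V' \<times> V'" using arcs'_subset .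
  fix x y assume "x \<in> V'" "y \<in> V'"
  then show "(x, y) \<in> A' \<longleftrightarrow> fd_arc T' (Inl x) (Inl y)"
    unfolding fd_arc_def using arcs'_iff Inl_in_tverts' by simp
qed

lemma depth'_Inl:
  assumes "x \<in> V" "x \<noteq> u"
  shows "depth T' (Inl x) = h x + (if below_v x then 1 else 0)"
  using depth'_simps(3)[OF subsetD[OF V_subset assms(1)]] Inl_eq_emb[OF assms] by simp

lemma depth'_out_neighbours_le_iff:
  assumes "(x, y) \<in> A" "(x, z) \<in> A"
  shows "depth T' (Inl y) \<le> depth T' (Inl z) \<longleftrightarrow> h y \<le> h z"
proof -
  have x: "x \<in> V" and y: "y \<in> V" "y \<noteq> u" and z: "z \<in> V" "z \<noteq> u"
    using assms arc_in_V source_u unfolding is_source_def by blast+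
  have yz_c: "y \<in> c x" "z \<in> c x" using arc_iff[OF x] y(1) z(1) assms by blast+
  then have "c x \<noteq> {}" by blast
  then obtain b where b: "b \<in> Vt" "c x = {a \<in> anc b. h (lb (par x)) \<le> h a}"
    using c_branch[OF subsetD[OF V_subset x]] by metis
  then have "y \<in> anc b" "z \<in> anc b" using yz_c by simp_all
  then show ?thesis
    unfolding depth'_Inl[OF y] depth'_Inl[OF z] using depth'_le_iff_on_chain[OF b(1)] by blast
qed

lemma depth'_Inl_v: "depth T' (Inl v) = h v"
  using depth'_Inl[OF v_in_V u_ne_v[symmetric]] not_below_v_v by simp

lemma depth'_Inl_u: "depth T' (Inl u) = Suc (h v)"
  using depth'_simps(1) by (simp add: u_leaf_def)

lemma top_arc'_w_v: "top_arc Inl T' A' w v"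
  unfolding top_arc_def arc'_iff using no_arc_from_w depth'_Inl_v depth'_Inl_u by auto

lemma bottom_arc'_w_u: "bottom_arc Inl T' A' w u"
  unfolding bottom_arc_def arc'_iff using no_arc_from_w depth'_Inl_v depth'_Inl_u by auto

lemma arc'_from_old_vertex: "(x, y) \<in> A \<Longrightarrow> (x, z) \<in> A' \<Longrightarrow> (x, z) \<in> A"
  using arc'_iff no_arc_from_w by blast

lemma top_arc'_if_top_arc:
  assumes "(x, y) \<noteq> (u, v)" "top_arc id T A x y"
  shows "top_arc Inl T' A' x y"
proof -
  have xy: "(x, y) \<in> A" and top: "\<And>z. (x, z) \<in> A \<Longrightarrow> h y \<le> h z"
    using assms(2) unfolding top_arc_def by auto
  show ?thesis
    unfolding top_arc_def
    using xy assms(1) arc'_iff arc'_from_old_vertex[OF xy] top depth'_out_neighbours_le_iff[OF xy]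
    by blast
qed

lemma bottom_arc'_if_bottom_arc:
  assumes "(x, y) \<noteq> (u, v)" "bottom_arc id T A x y"
  shows "bottom_arc Inl T' A' x y"
proof -
  have xy: "(x, y) \<in> A" and bottom: "\<And>z. (x, z) \<in> A \<Longrightarrow> h z \<le> h y"
    using assms(2) unfolding bottom_arc_def by auto
  show ?thesis
    unfolding bottom_arc_def
    using xy assms(1) arc'_iff arc'_from_old_vertex[OF xy] bottom depth'_out_neighbours_le_iff[OF _ xy]
    by blast
qed

end

theorem lemma3p7:
  fixes T :: "'a btree" and V :: "'a set" and A :: "('a \<times> 'a) set" and u v w :: 'a
  assumes "burling_tree T"
    and "oriented_graph V A"
    and "derived_via id T V A"
    and "top_arc id T A u v"
    and "is_source A u"
    and "w \<notin> V"
  shows "\<exists>T' :: ('a + nat) btree.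
           burling_tree T' \<and>
           derived_via Inl T' (top_subdiv_vertices V w) (top_subdiv_arcs A u v w) \<and>
           top_arc Inl T' (top_subdiv_arcs A u v w) w v \<and>
           bottom_arc Inl T' (top_subdiv_arcs A u v w) w u \<and>
           (\<forall>x y. (x, y) \<noteq> (u, v) \<and> top_arc id T A x y \<longrightarrow>
                  top_arc Inl T' (top_subdiv_arcs A u v w) x y) \<and>
           (\<forall>x y. (x, y) \<noteq> (u, v) \<and> bottom_arc id T A x y \<longrightarrow>
                  bottom_arc Inl T' (top_subdiv_arcs A u v w) x y)"
proof -
  interpret top_subdivision T V A u v w
    using assms by unfold_locales
  show ?thesis
    using burling_tree' derived_via' top_arc'_w_v bottom_arc'_w_u
      top_arc'_if_top_arc bottom_arc'_if_bottom_arc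
    by blast
qed

end
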